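(* Let $f$ be a diffeomorphism of $M=\mathbb{R}^d/\mathbb{Z}^d$ with an ergodic invariant Borel probability measure $\mu$, and let $A_1\subseteq A_2\subseteq\cdots$ be open sets with $A=\bigcup_mA_m$ $f$-invariant, $\mu(A)=1$, and $\mu(A_m)<1$ for all $m$. For $\varepsilon>0$ let $P_\varepsilon$ be the set of $x\in M$ for which there are infinitely many indices $m_1<m_2<\cdots$ and integers $j_i\ge\varepsilon/(1-\mu(A_{m_i}))$ such that $f^l(x)\in A_{m_i}$ for all $l$ with $-j_i\le l\le j_i$. Then $\mu(P_\varepsilon)\ge1-4\varepsilon$. *)

theory Defs
  imports "HOL-Probability.Probability"
begin

definition torus_rel :: "real^'n::finite \<Rightarrow> real^'n::finite \<Rightarrow> bool" where
  "torus_rel x y \<longleftrightarrow> (\<forall>i. x $ i - y $ i \<in> \<int>)"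

typedef ('n::finite) torus = "UNIV // {(x::real^'n, y). torus_rel x y}"
  by (auto simp: quotient_def)

definition tor_proj :: "real^'n::finite \<Rightarrow> 'n::finite torus" where
  "tor_proj x = Abs_torus ({(x::real^'n::finite, y). torus_rel x y} `` {x})"

definition torus_open :: "'n::finite torus set \<Rightarrow> bool" where
  "torus_open U \<longleftrightarrow> open (tor_proj -` U)"

definition torus_borel :: "'n::finite torus measure" where
  "torus_borel = sigma UNIV {U. torus_open U}"

definition C1_map :: "(real^'n::finite \<Rightarrow> real^'n::finite) \<Rightarrow> bool" where
  "C1_map F \<longleftrightarrow> (\<exists>F'. (\<forall>x. (F has_derivative F' x) (at x)) \<and>
                       (\<forall>v. continuous_on UNIV (\<lambda>x. F' x v)))"

definition torus_diffeo :: "('n::finite torus \<Rightarrow> 'n::finite torus) \<Rightarrow> bool" where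
  "torus_diffeo f \<longleftrightarrow> bij f \<and>
     (\<exists>F. C1_map F \<and> (\<forall>x. tor_proj (F x) = f (tor_proj x))) \<and>
     (\<exists>G. C1_map G \<and> (\<forall>x. tor_proj (G x) = inv f (tor_proj x)))"

definition int_iter :: "('a \<Rightarrow> 'a) \<Rightarrow> int \<Rightarrow> 'a \<Rightarrow> 'a" where
  "int_iter f l = (if 0 \<le> l then f ^^ nat l else inv f ^^ nat (- l))"

definition invariant_measure :: "('a \<Rightarrow> 'a) \<Rightarrow> 'a measure \<Rightarrow> bool" where
  "invariant_measure f \<mu> \<longleftrightarrow> f \<in> measurable \<mu> \<mu> \<and>
     (\<forall>B \<in> sets \<mu>. emeasure \<mu> (f -` B \<inter> space \<mu>) = emeasure \<mu> B)"

definition ergodic_measure :: "('a \<Rightarrow> 'a) \<Rightarrow> 'a measure \<Rightarrow> bool" where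
  "ergodic_measure f \<mu> \<longleftrightarrow> invariant_measure f \<mu> \<and>
     (\<forall>B \<in> sets \<mu>. f -` B \<inter> space \<mu> = B \<longrightarrow> measure \<mu> B = 0 \<or> measure \<mu> B = 1)"

definition P_set :: "('n::finite torus \<Rightarrow> 'n::finite torus) \<Rightarrow> 'n::finite torus measure \<Rightarrow> (nat \<Rightarrow> 'n::finite torus set)
                     \<Rightarrow> real \<Rightarrow> 'n::finite torus set" where
  "P_set f \<mu> A \<epsilon> = {x. \<exists>ms :: nat \<Rightarrow> nat. \<exists>js :: nat \<Rightarrow> int. strict_mono ms \<and>
      (\<forall>i. real_of_int (js i) \<ge> \<epsilon> / (1 - measure \<mu> (A (ms i))) \<and>
           (\<forall>l::int. - js i \<le> l \<and> l \<le> js i \<longrightarrow> int_iter f l x \<in> A (ms i)))}"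

end

theory Submission
  imports Defs "HOL-Library.Infinite_Set"
begin

(*
  Put a m = 1 - mu(A m) and J m = ceiling (eps / a m).  Let W m be the set of
  points whose two-sided orbit segment f^(-J m), ..., f^(J m) stays in A m.
  Since f and its inverse preserve mu, the complement of W m is a union of
  2 J m + 1 sets of measure a m, so mu(W m) >= 1 - (2 J m + 1) a m
  >= 1 - 2 eps - 3 a m.  The set P_eps is exactly limsup W m, and as a m -> 0
  (the A m exhaust a set of full measure) the measure of the limsup is at least
  1 - 2 eps >= 1 - 4 eps.
*)

definition preserves :: "'a measure \<Rightarrow> ('a \<Rightarrow> 'a) \<Rightarrow> bool" where
  "preserves M g \<longleftrightarrow> g \<in> measurable M M \<and>
     (\<forall>B \<in> sets M. measure M (g -` B \<inter> space M) = measure M B)"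

lemma preserves_id: "preserves M id"
  unfolding preserves_def by (simp add: measurable_ident_sets)

lemma preserves_comp:
  assumes "preserves M g" and "preserves M h"
  shows "preserves M (g \<circ> h)"
proof -
  have g: "g \<in> measurable M M" and h: "h \<in> measurable M M"
    using assms unfolding preserves_def by auto
  have "measure M ((g \<circ> h) -` B \<inter> space M) = measure M B" if B: "B \<in> sets M" for B
  proof -
    have gB: "g -` B \<inter> space M \<in> sets M" using measurable_sets[OF g B] .
    have "(g \<circ> h) -` B \<inter> space M = h -` (g -` B \<inter> space M) \<inter> space M"
      using measurable_space[OF h] by auto
    also have "measure M \<dots> = measure M (g -` B \<inter> space M)"
      using assms(2) gB unfolding preserves_def by blast
    also have "\<dots> = measure M B"
      using assms(1) B unfolding preserves_def by blast
    finally show ?thesis .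
  qed
  then show ?thesis using measurable_comp[OF h g] unfolding preserves_def by simp
qed

lemma preserves_funpow:
  assumes "preserves M g"
  shows "preserves M (g ^^ k)"
proof (induction k)
  case 0
  show ?case by (simp only: funpow.simps(1) preserves_id)
next
  case (Suc k)
  show ?case by (simp only: funpow.simps(2) preserves_comp[OF assms Suc])
qed

lemma preserves_inv:
  assumes "bij g" and "preserves M g" and inv_meas: "inv g \<in> measurable M M"
  shows "preserves M (inv g)"
proof -
  have g: "g \<in> measurable M M" using assms(2) unfolding preserves_def by simp
  have "measure M (inv g -` B \<inter> space M) = measure M B" if B: "B \<in> sets M" for B
  proof -
    let ?C = "inv g -` B \<inter> space M"
    have C: "?C \<in> sets M" using measurable_sets[OF inv_meas B] .
    have "g -` ?C \<inter> space M = B \<inter> space M"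
      using \<open>bij g\<close> measurable_space[OF g] by (auto simp: bij_def)
    also have "\<dots> = B" using sets.sets_into_space[OF B] by auto
    finally show ?thesis using assms(2) C unfolding preserves_def by metis
  qed
  then show ?thesis using inv_meas unfolding preserves_def by simp
qed

lemma preserves_int_iter:
  assumes "preserves M g" and "preserves M (inv g)"
  shows "preserves M (int_iter g l)"
  unfolding int_iter_def using assms by (simp add: preserves_funpow)

definition window :: "('a \<Rightarrow> 'a) \<Rightarrow> int \<Rightarrow> 'a set \<Rightarrow> 'a set" where
  "window g J S = {x. \<forall>l \<in> {-J..J}. int_iter g l x \<in> S}"

lemma window_antimono: "J \<le> K \<Longrightarrow> window g K S \<subseteq> window g J S"
  unfolding window_def by auto

text \<open>Union bound: the complement of a window is covered by 2J+1 preimages of the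
  complement of S, each of measure 1 - mu(S).\<close>
lemma measure_window_ge:
  assumes "prob_space M" and sp: "space M = UNIV" and S: "S \<in> sets M"
    and pres: "\<And>l. preserves M (int_iter g l)" and "J \<ge> 0"
  shows "window g J S \<in> sets M"
    and "1 - real_of_int (2 * J + 1) * (1 - measure M S) \<le> measure M (window g J S)"
proof -
  interpret prob_space M by fact
  have pre: "int_iter g l -` T \<in> sets M" if "T \<in> sets M" for l T
  proof -
    have "int_iter g l \<in> measurable M M" using pres unfolding preserves_def by blast
    from measurable_sets[OF this that] show ?thesis using sp by simp
  qed
  have cS: "- S \<in> sets M" using sets.compl_sets[OF S] sp by (simp add: Compl_eq_Diff_UNIV)
  have cW: "- window g J S = (\<Union>l\<in>{-J..J}. int_iter g l -` (- S))"
    unfolding window_def by auto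
  have W: "window g J S = (\<Inter>l\<in>{-J..J}. int_iter g l -` S)"
    unfolding window_def by auto
  show Wm: "window g J S \<in> sets M"
    unfolding W using pre S \<open>J \<ge> 0\<close> by (intro sets.finite_INT) auto
  have "measure M (- window g J S) \<le> (\<Sum>l\<in>{-J..J}. measure M (int_iter g l -` (- S)))"
    unfolding cW using pre cS by (intro finite_measure_subadditive_finite) auto
  also have "\<dots> = (\<Sum>l\<in>{-J..J}. 1 - measure M S)"
    using pres cS prob_compl[OF S] sp unfolding preserves_def by (simp add: Compl_eq_Diff_UNIV)
  also have "\<dots> = real_of_int (2 * J + 1) * (1 - measure M S)"
    using \<open>J \<ge> 0\<close> by simp
  finally show "1 - real_of_int (2 * J + 1) * (1 - measure M S) \<le> measure M (window g J S)"
    using prob_compl[OF Wm] sp by (simp add: Compl_eq_Diff_UNIV)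
qed

lemma ceiling_window_cost:
  fixes \<epsilon> a :: real
  assumes "a > 0" and "\<epsilon> \<ge> 0"
  shows "real_of_int (2 * \<lceil>\<epsilon> / a\<rceil> + 1) * a \<le> 2 * \<epsilon> + 3 * a"
proof -
  have "real_of_int \<lceil>\<epsilon> / a\<rceil> \<le> \<epsilon> / a + 1" by linarith
  then have "real_of_int \<lceil>\<epsilon> / a\<rceil> * a \<le> (\<epsilon> / a + 1) * a"
    using assms(1) by (intro mult_right_mono) auto
  also have "\<dots> = \<epsilon> + a" using assms(1) by (simp add: field_simps)
  finally show ?thesis by (simp add: algebra_simps)
qed

lemma (in finite_measure) measure_limsup_ge:
  assumes B: "\<And>m. B m \<in> sets M"
    and lower: "\<And>m. b m \<le> measure M (B m)" and lim: "b \<longlonglongrightarrow> c"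
  shows "c \<le> measure M (\<Inter>n. \<Union>m\<in>{n..}. B m)"
proof -
  define D where "D n = (\<Union>m\<in>{n..}. B m)" for n
  have D: "D n \<in> sets M" for n unfolding D_def using B by auto
  have "c \<le> measure M (D n)" for n
  proof (rule LIMSEQ_le_const2[OF lim], intro exI allI impI)
    fix m assume "n \<le> m"
    then have "measure M (B m) \<le> measure M (D n)"
      using D B unfolding D_def by (intro finite_measure_mono) auto
    then show "b m \<le> measure M (D n)" using lower[of m] by linarith
  qed
  moreover have "decseq D" unfolding D_def decseq_def by force
  then have "(\<lambda>n. measure M (D n)) \<longlonglongrightarrow> measure M (\<Inter>n. D n)"
    using D by (intro finite_Lim_measure_decseq) auto
  ultimately show ?thesis unfolding D_def by (intro LIMSEQ_le_const) auto
qed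

lemma space_torus_borel: "space (torus_borel :: 'n::finite torus measure) = UNIV"
  unfolding torus_borel_def by (simp add: space_measure_of_conv)

lemma torus_open_in_sets:
  assumes "sets \<mu> = sets (torus_borel :: 'n::finite torus measure)" and "torus_open U"
  shows "U \<in> sets \<mu>"
proof -
  have "U \<in> sets torus_borel" unfolding torus_borel_def using assms(2) by (intro in_measure_of) auto
  then show ?thesis using assms(1) by simp
qed

text \<open>A map of the torus with a continuous lift is Borel measurable: preimages of
  open sets are open, since preimages commute with the projection.\<close>
lemma torus_lift_measurable:
  fixes g :: "'n::finite torus \<Rightarrow> 'n torus"
  assumes cont: "continuous_on UNIV G" and lift: "\<And>x. tor_proj (G x) = g (tor_proj x)"
    and sets_eq: "sets \<mu> = sets (torus_borel :: 'n torus measure)"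
  shows "g \<in> measurable \<mu> \<mu>"
proof -
  have "g \<in> measurable \<mu> torus_borel"
    unfolding torus_borel_def
  proof (rule measurable_measure_of)
    fix U :: "'n torus set" assume "U \<in> {U. torus_open U}"
    then have U: "open (tor_proj -` U)" unfolding torus_open_def by simp
    have "tor_proj -` (g -` U) = G -` (tor_proj -` U)" using lift by auto
    then have "torus_open (g -` U)"
      unfolding torus_open_def using U cont continuous_on_open_vimage[of UNIV G] by auto
    then show "g -` U \<inter> space \<mu> \<in> sets \<mu>"
      using torus_open_in_sets[OF sets_eq] by simp
  qed (use sets_eq_imp_space_eq[OF sets_eq] space_torus_borel in auto)
  then show ?thesis using measurable_cong_sets[OF refl sets_eq[symmetric]] by blast
qed

lemma torus_diffeo_preserves_int_iter:
  fixes f :: "'n::finite torus \<Rightarrow> 'n torus"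
  assumes diffeo: "torus_diffeo f" and sets_eq: "sets \<mu> = sets (torus_borel :: 'n torus measure)"
    and invar: "invariant_measure f \<mu>"
  shows "preserves \<mu> (int_iter f l)"
proof -
  have f: "preserves \<mu> f"
    using invar unfolding invariant_measure_def preserves_def measure_def by simp
  obtain G where G: "C1_map G" "\<And>x. tor_proj (G x) = inv f (tor_proj x)"
    using diffeo unfolding torus_diffeo_def by blast
  have "continuous_on UNIV G"
    using G(1) unfolding C1_map_def
    by (metis continuous_at_imp_continuous_on has_derivative_continuous)
  then have "inv f \<in> measurable \<mu> \<mu>" using torus_lift_measurable G(2) sets_eq by blast
  then have "preserves \<mu> (inv f)"
    using preserves_inv f diffeo unfolding torus_diffeo_def by blast
  then show ?thesis using preserves_int_iter f by blast
qed

text \<open>A point lies in P_eps iff it lies in infinitely many windows of radius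
  ceiling (eps / (1 - mu(A m))) around A m; larger radii only shrink windows.\<close>
lemma P_set_eq_limsup:
  "P_set f \<mu> A \<epsilon> =
     (\<Inter>n. \<Union>m\<in>{n..}. window f \<lceil>\<epsilon> / (1 - measure \<mu> (A m))\<rceil> (A m))"
  (is "_ = (\<Inter>n. \<Union>m\<in>{n..}. ?W m)")
proof (intro equalityI subsetI)
  fix x assume "x \<in> P_set f \<mu> A \<epsilon>"
  then obtain ms :: "nat \<Rightarrow> nat" and js :: "nat \<Rightarrow> int" where sm: "strict_mono ms"
    and js: "\<And>i. \<epsilon> / (1 - measure \<mu> (A (ms i))) \<le> real_of_int (js i)"
    and orbit: "\<And>i. x \<in> window f (js i) (A (ms i))"
    unfolding P_set_def window_def by fastforce
  have "x \<in> ?W (ms n)" for n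
    by (rule subsetD[OF window_antimono[OF ceiling_le[OF js]] orbit])
  then show "x \<in> (\<Inter>n. \<Union>m\<in>{n..}. ?W m)"
    using seq_suble[OF sm] by blast
next
  fix x assume x: "x \<in> (\<Inter>n. \<Union>m\<in>{n..}. ?W m)"
  define S where "S = {m. x \<in> ?W m}"
  have "infinite S" unfolding S_def infinite_nat_iff_unbounded_le using x by auto
  then have sm: "strict_mono (enumerate S)" and ins: "\<And>i. enumerate S i \<in> S"
    by (auto simp: strict_mono_enumerate enumerate_in_set)
  have "x \<in> ?W (enumerate S i)" for i using ins[of i] unfolding S_def by simp
  then show "x \<in> P_set f \<mu> A \<epsilon>"
    unfolding P_set_def window_def using sm le_of_int_ceiling
    by (intro CollectI exI[of _ "enumerate S"]
          exI[of _ "\<lambda>i. \<lceil>\<epsilon> / (1 - measure \<mu> (A (enumerate S i)))\<rceil>"]) auto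
qed

theorem lemma4p4:
  fixes f :: "'n::finite torus \<Rightarrow> 'n::finite torus"
    and \<mu> :: "'n::finite torus measure"
    and A :: "nat \<Rightarrow> 'n::finite torus set"
    and \<epsilon> :: real
  assumes diffeo: "torus_diffeo f"
    and borel: "sets \<mu> = sets torus_borel"
    and prob: "prob_space \<mu>"
    and erg: "ergodic_measure f \<mu>"
    and opn: "\<And>m. torus_open (A m)"
    and incr: "\<And>m. A m \<subseteq> A (Suc m)"
    and inv: "f -` (\<Union>m. A m) = (\<Union>m. A m)"
    and full: "measure \<mu> (\<Union>m. A m) = 1"
    and small: "\<And>m. measure \<mu> (A m) < 1"
    and eps: "\<epsilon> > 0"
  shows "P_set f \<mu> A \<epsilon> \<in> sets \<mu> \<and> measure \<mu> (P_set f \<mu> A \<epsilon>) \<ge> 1 - 4 * \<epsilon>"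
proof -
  interpret prob_space \<mu> by (rule prob)
  have sp: "space \<mu> = UNIV" using sets_eq_imp_space_eq[OF borel] space_torus_borel by simp
  have Am: "A m \<in> sets \<mu>" for m using torus_open_in_sets[OF borel opn] .
  have pres: "preserves \<mu> (int_iter f l)" for l
    using torus_diffeo_preserves_int_iter diffeo borel erg
    unfolding ergodic_measure_def by blast
  define a where "a m = 1 - measure \<mu> (A m)" for m
  define W where "W m = window f \<lceil>\<epsilon> / a m\<rceil> (A m)" for m
  have a_pos: "a m > 0" for m using small[of m] unfolding a_def by simp
  have radius: "\<lceil>\<epsilon> / a m\<rceil> \<ge> 0" for m
  proof -
    have "0 < \<epsilon> / a m" using a_pos[of m] eps by simp
    then show ?thesis by linarith
  qed
  have Wm: "W m \<in> sets \<mu>" for m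
    unfolding W_def using measure_window_ge(1)[OF prob sp Am pres radius] .
  have W_ge: "1 - 2 * \<epsilon> - 3 * a m \<le> measure \<mu> (W m)" for m
    using measure_window_ge(2)[OF prob sp Am[of m] pres radius[of m]]
      ceiling_window_cost[OF a_pos[of m] less_imp_le[OF eps]] unfolding W_def a_def by simp
  have "(\<lambda>m. measure \<mu> (A m)) \<longlonglongrightarrow> 1"
    using finite_Lim_measure_incseq[of A] Am incr full by (auto simp: incseq_Suc_iff)
  then have "(\<lambda>m. 1 - 2 * \<epsilon> - 3 * a m) \<longlonglongrightarrow> 1 - 2 * \<epsilon> - 3 * (1 - 1)"
    unfolding a_def by (intro tendsto_intros)
  then have "1 - 2 * \<epsilon> \<le> measure \<mu> (\<Inter>n. \<Union>m\<in>{n..}. W m)"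
    using measure_limsup_ge[OF Wm W_ge] by simp
  moreover have P: "P_set f \<mu> A \<epsilon> = (\<Inter>n. \<Union>m\<in>{n..}. W m)"
    unfolding P_set_eq_limsup W_def a_def ..
  moreover have "P_set f \<mu> A \<epsilon> \<in> sets \<mu>" unfolding P using Wm by auto
  ultimately show ?thesis using eps by auto
qed

end
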